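(* For all real numbers $x,y$ with $|x|+|y|\le 1$, \[ \left|1+\frac x2-\sqrt{1+x+y}\right| \le 1-\frac{|x|}2-\sqrt{1-|x|-|y|}. \] *)

theory Defs
  imports Complex_Main
begin
end

theory Submission
  imports Defs
begin

(* Write u = sqrt (1 + x + y) and v = sqrt (1 - |x| - |y|). The claim splits into
   the two one-sided bounds  u - v >= (x + |x|) / 2  and  u + v <= 2 + (x - |x|) / 2.
   Both follow from the tangent-line bound sqrt t <= (1 + t) / 2: the second directly,
   the first (for x >= 0) after squaring v + x. *)

lemma sqrt_le_one_plus_half:
  fixes t :: real
  assumes "0 \<le> t"
  shows "sqrt t \<le> (1 + t) / 2"
  using arith_geo_mean_sqrt[of 1 t] assms by simp

lemma sqrt_plus_le_sqrt:
  fixes t x :: real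
  assumes "0 \<le> t" and "0 \<le> x"
  shows "sqrt t + x \<le> sqrt (t + x * (1 + t) + x\<^sup>2)"
proof (rule real_le_rsqrt)
  have "2 * x * sqrt t \<le> x * (1 + t)"
    using mult_left_mono[OF sqrt_le_one_plus_half[OF \<open>0 \<le> t\<close>] \<open>0 \<le> x\<close>] by simp
  then show "(sqrt t + x)\<^sup>2 \<le> t + x * (1 + t) + x\<^sup>2"
    using \<open>0 \<le> t\<close> by (simp add: power2_sum mult.commute mult.left_commute)
qed

theorem lemma8:
  fixes x y :: real
  assumes "\<bar>x\<bar> + \<bar>y\<bar> \<le> 1"
  shows "\<bar>1 + x / 2 - sqrt (1 + x + y)\<bar> \<le> 1 - \<bar>x\<bar> / 2 - sqrt (1 - \<bar>x\<bar> - \<bar>y\<bar>)"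
proof -
  define u where "u = sqrt (1 + x + y)"
  define v where "v = sqrt (1 - \<bar>x\<bar> - \<bar>y\<bar>)"
  have nonneg: "0 \<le> 1 + x + y" "0 \<le> 1 - \<bar>x\<bar> - \<bar>y\<bar>"
    using assms by linarith+
  have lower: "v + (x + \<bar>x\<bar>) / 2 \<le> u"
  proof (cases "0 \<le> x")
    case True
    have "v + x \<le> sqrt (1 - \<bar>y\<bar> + x * (1 - \<bar>y\<bar>))"
      using sqrt_plus_le_sqrt[OF nonneg(2) True] True
      unfolding v_def by (simp add: algebra_simps power2_eq_square)
    also have "\<dots> \<le> u"
      unfolding u_def
    proof (rule real_sqrt_le_mono)
      have "0 \<le> x * \<bar>y\<bar>" and "- \<bar>y\<bar> \<le> y"
        using True by simp_all
      then show "1 - \<bar>y\<bar> + x * (1 - \<bar>y\<bar>) \<le> 1 + x + y"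
        by (simp add: algebra_simps)
    qed
    finally show ?thesis using True by simp
  next
    case False
    then show ?thesis unfolding u_def v_def by (simp add: real_sqrt_le_mono)
  qed
  have upper: "u + v \<le> 2 + (x - \<bar>x\<bar>) / 2"
    using sqrt_le_one_plus_half[OF nonneg(1)] sqrt_le_one_plus_half[OF nonneg(2)] abs_ge_self[of y]
    unfolding u_def v_def by argo
  show ?thesis
    using lower upper unfolding u_def[symmetric] v_def[symmetric] abs_le_iff by argo
qed

end
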